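(* Let $L$ be a finite-dimensional non-nilpotent Lie algebra over a field $F$, and suppose $U$ is a nonzero proper strongly self-centralizing subalgebra of $L$. Then: (1) $\mathrm{nil}_L(x)=U$ for all $0\neq x\in U$; (2) $\Gamma_{\mathfrak{N}}(L)$ is disconnected; (3) if $F$ is finite, then $|N(L)|-1\le\omega(\Gamma_{\mathfrak{N}}(L))$.
   Context: A subalgebra $U$ of $L$ is strongly self-centralizing if $C_L(x)=U$ for all $0\neq x\in U$, where $C_L(x)=\{y\in L\mid [x,y]=0\}$. $\langle a,b\rangle$ denotes the Lie subalgebra generated by $a,b$; $\mathrm{nil}_L(h)=\{x\in L\mid \langle h,x\rangle \text{ is nilpotent}\}$ and $\mathrm{nil}(L)=\{x\in L\mid \langle h,x\rangle \text{ is nilpotent for all } h\in L\}$. The nilpotent graph $\Gamma_{\mathfrak{N}}(L)$ is the simple undirected graph with vertex set $L\setminus\mathrm{nil}(L)$ in which distinct vertices $x,y$ are adjacent iff $\langle x,y\rangle$ is nilpotent. $\omega(\Gamma)$ is the clique number of $\Gamma$, and $N(L)$ is the nilradical (largest nilpotent ideal) of $L$. *)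

theory Defs
  imports Complex_Main
begin

text \<open>A Lie algebra is modelled as the whole carrier type 'v, a vector space over the
field 'k (scalar multiplication sc), with Lie bracket br.\<close>

definition lie_algebra :: "('k::field \<Rightarrow> 'v::ab_group_add \<Rightarrow> 'v) \<Rightarrow> ('v \<Rightarrow> 'v \<Rightarrow> 'v) \<Rightarrow> bool" where
  "lie_algebra sc br \<longleftrightarrow> vector_space sc \<and>
     (\<forall>x y z. br (x + y) z = br x z + br y z) \<and>
     (\<forall>x y z. br x (y + z) = br x y + br x z) \<and>
     (\<forall>c x y. br (sc c x) y = sc c (br x y)) \<and>
     (\<forall>c x y. br x (sc c y) = sc c (br x y)) \<and>
     (\<forall>x. br x x = 0) \<and>
     (\<forall>x y z. br x (br y z) + br y (br z x) + br z (br x y) = 0)"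

definition fin_dim :: "('k::field \<Rightarrow> 'v::ab_group_add \<Rightarrow> 'v) \<Rightarrow> bool" where
  "fin_dim sc \<longleftrightarrow> (\<exists>B. finite B \<and> module.span sc B = UNIV)"

definition lie_subalgebra :: "('k::field \<Rightarrow> 'v::ab_group_add \<Rightarrow> 'v) \<Rightarrow> ('v \<Rightarrow> 'v \<Rightarrow> 'v) \<Rightarrow> 'v set \<Rightarrow> bool" where
  "lie_subalgebra sc br S \<longleftrightarrow> module.subspace sc S \<and> (\<forall>x\<in>S. \<forall>y\<in>S. br x y \<in> S)"

definition lie_ideal :: "('k::field \<Rightarrow> 'v::ab_group_add \<Rightarrow> 'v) \<Rightarrow> ('v \<Rightarrow> 'v \<Rightarrow> 'v) \<Rightarrow> 'v set \<Rightarrow> bool" where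
  "lie_ideal sc br I \<longleftrightarrow> module.subspace sc I \<and> (\<forall>x. \<forall>y\<in>I. br x y \<in> I)"

fun lcs :: "('k::field \<Rightarrow> 'v::ab_group_add \<Rightarrow> 'v) \<Rightarrow> ('v \<Rightarrow> 'v \<Rightarrow> 'v) \<Rightarrow> 'v set \<Rightarrow> nat \<Rightarrow> 'v set" where
  "lcs sc br S 0 = S"
| "lcs sc br S (Suc n) = module.span sc {br x y | x y. x \<in> S \<and> y \<in> lcs sc br S n}"

definition lie_nilpotent :: "('k::field \<Rightarrow> 'v::ab_group_add \<Rightarrow> 'v) \<Rightarrow> ('v \<Rightarrow> 'v \<Rightarrow> 'v) \<Rightarrow> 'v set \<Rightarrow> bool" where
  "lie_nilpotent sc br S \<longleftrightarrow> (\<exists>n. lcs sc br S n = {0})"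

definition gen :: "('k::field \<Rightarrow> 'v::ab_group_add \<Rightarrow> 'v) \<Rightarrow> ('v \<Rightarrow> 'v \<Rightarrow> 'v) \<Rightarrow> 'v set \<Rightarrow> 'v set" where
  "gen sc br A = \<Inter>{S. lie_subalgebra sc br S \<and> A \<subseteq> S}"

definition centralizer :: "('v::ab_group_add \<Rightarrow> 'v \<Rightarrow> 'v) \<Rightarrow> 'v \<Rightarrow> 'v set" where
  "centralizer br x = {y. br x y = 0}"

definition strongly_self_centralizing :: "('k::field \<Rightarrow> 'v::ab_group_add \<Rightarrow> 'v) \<Rightarrow> ('v \<Rightarrow> 'v \<Rightarrow> 'v) \<Rightarrow> 'v set \<Rightarrow> bool" where
  "strongly_self_centralizing sc br U \<longleftrightarrow> lie_subalgebra sc br U \<and>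
     (\<forall>x\<in>U. x \<noteq> 0 \<longrightarrow> centralizer br x = U)"

definition nil_of :: "('k::field \<Rightarrow> 'v::ab_group_add \<Rightarrow> 'v) \<Rightarrow> ('v \<Rightarrow> 'v \<Rightarrow> 'v) \<Rightarrow> 'v \<Rightarrow> 'v set" where
  "nil_of sc br h = {x. lie_nilpotent sc br (gen sc br {h, x})}"

definition nil_all :: "('k::field \<Rightarrow> 'v::ab_group_add \<Rightarrow> 'v) \<Rightarrow> ('v \<Rightarrow> 'v \<Rightarrow> 'v) \<Rightarrow> 'v set" where
  "nil_all sc br = {x. \<forall>h. lie_nilpotent sc br (gen sc br {h, x})}"

definition ng_vertices :: "('k::field \<Rightarrow> 'v::ab_group_add \<Rightarrow> 'v) \<Rightarrow> ('v \<Rightarrow> 'v \<Rightarrow> 'v) \<Rightarrow> 'v set" where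
  "ng_vertices sc br = UNIV - nil_all sc br"

definition ng_adj :: "('k::field \<Rightarrow> 'v::ab_group_add \<Rightarrow> 'v) \<Rightarrow> ('v \<Rightarrow> 'v \<Rightarrow> 'v) \<Rightarrow> 'v \<Rightarrow> 'v \<Rightarrow> bool" where
  "ng_adj sc br x y \<longleftrightarrow> x \<in> ng_vertices sc br \<and> y \<in> ng_vertices sc br \<and> x \<noteq> y \<and>
     lie_nilpotent sc br (gen sc br {x, y})"

definition ng_connected :: "('k::field \<Rightarrow> 'v::ab_group_add \<Rightarrow> 'v) \<Rightarrow> ('v \<Rightarrow> 'v \<Rightarrow> 'v) \<Rightarrow> bool" where
  "ng_connected sc br \<longleftrightarrow>
     (\<forall>x\<in>ng_vertices sc br. \<forall>y\<in>ng_vertices sc br. (ng_adj sc br)\<^sup>*\<^sup>* x y)"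

definition ng_clique :: "('k::field \<Rightarrow> 'v::ab_group_add \<Rightarrow> 'v) \<Rightarrow> ('v \<Rightarrow> 'v \<Rightarrow> 'v) \<Rightarrow> 'v set \<Rightarrow> bool" where
  "ng_clique sc br C \<longleftrightarrow> C \<subseteq> ng_vertices sc br \<and>
     (\<forall>x\<in>C. \<forall>y\<in>C. x \<noteq> y \<longrightarrow> ng_adj sc br x y)"

text \<open>Clique number (meaningful for finite graphs, which is the case it is used in).\<close>
definition ng_clique_number :: "('k::field \<Rightarrow> 'v::ab_group_add \<Rightarrow> 'v) \<Rightarrow> ('v \<Rightarrow> 'v \<Rightarrow> 'v) \<Rightarrow> nat" where
  "ng_clique_number sc br = Sup {card C | C. finite C \<and> ng_clique sc br C}"

definition nilradical :: "('k::field \<Rightarrow> 'v::ab_group_add \<Rightarrow> 'v) \<Rightarrow> ('v \<Rightarrow> 'v \<Rightarrow> 'v) \<Rightarrow> 'v set" where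
  "nilradical sc br = (THE N. lie_ideal sc br N \<and> lie_nilpotent sc br N \<and>
     (\<forall>I. lie_ideal sc br I \<and> lie_nilpotent sc br I \<longrightarrow> I \<subseteq> N))"

end

theory Submission
  imports Defs "HOL-Library.FuncSet"
begin

text \<open>A strongly self-centralizing subalgebra \<open>U\<close> is abelian. If \<open>0 \<noteq> x \<in> U\<close> and
\<open>\<langle>x, y\<rangle>\<close> is nilpotent, the last nonzero term of its lower central series contains some
\<open>z \<noteq> 0\<close> commuting with \<open>x\<close> and \<open>y\<close>; then \<open>z \<in> C\<^sub>L(x) = U\<close> and \<open>y \<in> C\<^sub>L(z) = U\<close>, so
\<open>nil\<^sub>L(x) = U\<close>. Consequently \<open>nil(L) = 0\<close>, and no edge of the nilpotent graph leaves
\<open>U - {0}\<close>, which disconnects it from \<open>L - U\<close>. Over a finite field \<open>L\<close> is finite; since the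
sum of two nilpotent ideals is nilpotent, the nilradical exists, and its nonzero elements
form a clique.\<close>

locale lie_alg = vector_space sc for sc :: "'k::field \<Rightarrow> 'v::ab_group_add \<Rightarrow> 'v" +
  fixes br :: "'v \<Rightarrow> 'v \<Rightarrow> 'v"
  assumes br_add_left: "br (x + y) z = br x z + br y z"
    and br_add_right: "br x (y + z) = br x y + br x z"
    and br_scale_left: "br (sc c x) y = sc c (br x y)"
    and br_scale_right: "br x (sc c y) = sc c (br x y)"
    and br_self: "br x x = 0"
    and jacobi: "br x (br y z) + br y (br z x) + br z (br x y) = 0"

lemma lie_alg_if_lie_algebra: "lie_algebra sc br \<Longrightarrow> lie_alg sc br"
  unfolding lie_algebra_def lie_alg_def lie_alg_axioms_def by auto

context lie_alg
begin

lemma br_zero_left [simp]: "br 0 y = 0"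
  using br_add_left[of 0 0 y] by simp

lemma br_zero_right [simp]: "br x 0 = 0"
  using br_add_right[of x 0 0] by simp

lemma br_anticomm: "br y x = - br x y"
proof (rule minus_unique[symmetric])
  have "br x x + br x y + (br y x + br y y) = 0"
    using br_self[of "x + y"] by (simp add: br_add_left br_add_right add.assoc add.left_commute)
  then show "br x y + br y x = 0" by (simp add: br_self)
qed

lemma br_minus_right: "br x (- y) = - br x y"
  using br_add_right[of x y "- y"] by (intro minus_unique[symmetric]) simp

lemma br_derivation: "br x (br a y) = br (br x a) y + br a (br x y)"
proof -
  have "br x (br a y) + br a (br y x) + br y (br x a) = 0" by (rule jacobi)
  moreover have "br a (br y x) = - br a (br x y)" by (simp add: br_anticomm[of y x] br_minus_right)
  moreover have "br y (br x a) = - br (br x a) y" by (rule br_anticomm)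
  ultimately show ?thesis by (simp add: algebra_simps eq_neg_iff_add_eq_0)
qed

lemma br_mem_if_mem_span:
  assumes "subspace T" "\<And>z. z \<in> X \<Longrightarrow> br a z \<in> T" "z \<in> span X"
  shows "br a z \<in> T"
proof -
  have "subspace {z. br a z \<in> T}"
    using assms(1) by (auto simp: subspace_def br_add_right br_scale_right)
  then show ?thesis using span_induct[OF assms(3), of "\<lambda>z. br a z \<in> T"] assms(2) by blast
qed

lemma zero_mem_lcs: "0 \<in> S \<Longrightarrow> 0 \<in> lcs sc br S k"
  by (cases k) (auto simp: span_zero)

lemma lcs_mono: "S \<subseteq> T \<Longrightarrow> lcs sc br S k \<subseteq> lcs sc br T k"
proof (induction k)
  case (Suc k)
  then show ?case by (simp, intro span_mono) blast
qed simp

lemma lie_ideal_lcs: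
  assumes I: "lie_ideal sc br I"
  shows "lie_ideal sc br (lcs sc br I k)"
proof (induction k)
  case 0
  show ?case using I by simp
next
  case (Suc k)
  let ?G = "{br a y | a y. a \<in> I \<and> y \<in> lcs sc br I k}"
  have "br x z \<in> span ?G" if "z \<in> span ?G" for x z
  proof (rule br_mem_if_mem_span[OF subspace_span _ that])
    fix g assume "g \<in> ?G"
    then obtain a y where g: "g = br a y" "a \<in> I" "y \<in> lcs sc br I k" by blast
    have "br x a \<in> I" "br x y \<in> lcs sc br I k"
      using g I Suc by (auto simp: lie_ideal_def)
    then have "br (br x a) y \<in> ?G" "br a (br x y) \<in> ?G"
      using g by blast+
    then show "br x g \<in> span ?G"
      unfolding g(1) br_derivation[of x a y] by (intro span_add span_base)
  qed
  then show ?case by (simp add: lie_ideal_def)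
qed

lemma lcs_Suc_subset:
  assumes "lie_ideal sc br I"
  shows "lcs sc br I (Suc k) \<subseteq> lcs sc br I k"
proof -
  have "span {br a y | a y. a \<in> I \<and> y \<in> lcs sc br I k} \<subseteq> lcs sc br I k"
    using lie_ideal_lcs[OF assms, of k] by (intro span_minimal) (auto simp: lie_ideal_def)
  then show ?thesis by simp
qed

lemma lcs_antimono:
  assumes "lie_ideal sc br I" "m \<le> k"
  shows "lcs sc br I k \<subseteq> lcs sc br I m"
  using lift_Suc_antimono_le[of "lcs sc br I", OF lcs_Suc_subset[OF assms(1)] assms(2)] .

lemma lie_nilpotent_subset:
  assumes "lie_nilpotent sc br S" "B \<subseteq> S" "0 \<in> B"
  shows "lie_nilpotent sc br B"
proof -
  obtain n where "lcs sc br S n = {0}" using assms(1) by (auto simp: lie_nilpotent_def)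
  then have "lcs sc br B n = {0}"
    using lcs_mono[OF assms(2), of n] zero_mem_lcs[OF assms(3), of n] by blast
  then show ?thesis by (auto simp: lie_nilpotent_def)
qed

lemma abelian_lie_nilpotent:
  assumes "0 \<in> S" "\<And>a b. a \<in> S \<Longrightarrow> b \<in> S \<Longrightarrow> br a b = 0"
  shows "lie_nilpotent sc br S"
proof -
  have "{br a b | a b. a \<in> S \<and> b \<in> lcs sc br S 0} \<subseteq> {0}" using assms(2) by auto
  then have "lcs sc br S 1 \<subseteq> {0}" by (simp add: span_minimal)
  then have "lcs sc br S 1 = {0}" using zero_mem_lcs[OF assms(1)] by blast
  then show ?thesis unfolding lie_nilpotent_def by blast
qed

text \<open>The last nonzero term of the lower central series is central.\<close>
lemma lie_nilpotent_central_element: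
  assumes "lie_nilpotent sc br S" "x \<in> S" "x \<noteq> 0"
  shows "\<exists>z. z \<noteq> 0 \<and> (\<forall>y\<in>S. br y z = 0)"
proof -
  obtain n where "lcs sc br S n \<subseteq> {0}" using assms(1) by (auto simp: lie_nilpotent_def)
  moreover have "\<not> lcs sc br S 0 \<subseteq> {0}" using assms(2,3) by auto
  ultimately obtain m where m: "\<not> lcs sc br S m \<subseteq> {0}" "lcs sc br S (Suc m) \<subseteq> {0}"
    using ex_least_nat_less[of "\<lambda>n. lcs sc br S n \<subseteq> {0}"] by blast
  then obtain z where z: "z \<in> lcs sc br S m" "z \<noteq> 0" by blast
  have "br y z = 0" if "y \<in> S" for y
    using m(2) z(1) that by (auto intro: span_base)
  then show ?thesis using z(2) by blast
qed

text \<open>\<open>I\<^bsup>0\<^esup> = L\<close> and \<open>I\<^bsup>p+1\<^esup> = C\<^bsup>p\<^esup>(I)\<close>; the shift makes \<open>[I, I\<^bsup>p\<^esup>] \<subseteq> I\<^bsup>p+1\<^esup>\<close> hold also for \<open>p = 0\<close>.\<close>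
definition ideal_power :: "'v set \<Rightarrow> nat \<Rightarrow> 'v set" where
  "ideal_power I p = (case p of 0 \<Rightarrow> UNIV | Suc q \<Rightarrow> lcs sc br I q)"

lemma lie_ideal_ideal_power:
  assumes "lie_ideal sc br I"
  shows "lie_ideal sc br (ideal_power I p)"
proof (cases p)
  case 0
  then show ?thesis by (simp add: ideal_power_def lie_ideal_def)
next
  case Suc
  then show ?thesis by (simp add: ideal_power_def lie_ideal_lcs[OF assms])
qed

lemma br_mem_ideal_power_Suc:
  assumes I: "lie_ideal sc br I" and "a \<in> I" "z \<in> ideal_power I p"
  shows "br a z \<in> ideal_power I (Suc p)"
proof (cases p)
  case 0
  have "br z a \<in> I" using I assms(2) by (simp add: lie_ideal_def)
  then have "- br z a \<in> I" using I subspace_neg by (auto simp: lie_ideal_def)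
  then show ?thesis using 0 by (simp add: ideal_power_def br_anticomm[of a z])
next
  case Suc
  then show ?thesis using assms(2,3) by (auto simp: ideal_power_def intro!: span_base)
qed

lemma ideal_power_subset_zero:
  assumes I: "lie_ideal sc br I" and "lcs sc br I m = {0}" "m < p"
  shows "ideal_power I p \<subseteq> {0}"
proof -
  obtain q where "p = Suc q" "m \<le> q" using assms(3) by (cases p) auto
  then show ?thesis using lcs_antimono[OF I \<open>m \<le> q\<close>] assms(2) by (simp add: ideal_power_def)
qed

lemma lie_ideal_sum:
  assumes I: "lie_ideal sc br I" and J: "lie_ideal sc br J"
  shows "lie_ideal sc br {a + b | a b. a \<in> I \<and> b \<in> J}"
proof -
  have "br x y \<in> {a + b | a b. a \<in> I \<and> b \<in> J}"
    if y: "y \<in> {a + b | a b. a \<in> I \<and> b \<in> J}" for x y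
  proof -
    obtain a b where "y = a + b" "a \<in> I" "b \<in> J" using y by blast
    then show ?thesis using I J
      by (intro CollectI exI[of _ "br x a"] exI[of _ "br x b"]) (auto simp: br_add_right lie_ideal_def)
  qed
  then show ?thesis using I J subspace_sums by (auto simp: lie_ideal_def)
qed

text \<open>Bracketing with \<open>I\<close> or with \<open>J\<close> raises the index of this filtration by one, and it
vanishes once \<open>n\<close> exceeds the sum of the nilpotency classes of \<open>I\<close> and \<open>J\<close>.\<close>
definition sum_filtration :: "'v set \<Rightarrow> 'v set \<Rightarrow> nat \<Rightarrow> 'v set" where
  "sum_filtration I J n = span (\<Union>{ideal_power I p \<inter> ideal_power J q | p q. p + q = n})"

lemma mem_sum_filtration:
  "z \<in> ideal_power I p \<Longrightarrow> z \<in> ideal_power J q \<Longrightarrow> z \<in> sum_filtration I J (p + q)"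
  unfolding sum_filtration_def
  by (intro span_base UnionI[of "ideal_power I p \<inter> ideal_power J q"]) blast+

lemma br_mem_sum_filtration_Suc:
  assumes I: "lie_ideal sc br I" and J: "lie_ideal sc br J"
    and x: "x \<in> I \<or> x \<in> J" and z: "z \<in> sum_filtration I J n"
  shows "br x z \<in> sum_filtration I J (Suc n)"
  unfolding sum_filtration_def
proof (rule br_mem_if_mem_span[OF subspace_span _ z[unfolded sum_filtration_def]])
  fix z assume "z \<in> \<Union>{ideal_power I p \<inter> ideal_power J q | p q. p + q = n}"
  then obtain p q where pq: "p + q = n" "z \<in> ideal_power I p" "z \<in> ideal_power J q" by blast
  have "br x z \<in> ideal_power I p" "br x z \<in> ideal_power J q"
    using lie_ideal_ideal_power[OF I] lie_ideal_ideal_power[OF J] pq(2,3)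
    by (auto simp: lie_ideal_def)
  moreover have "br x z \<in> ideal_power I (Suc p) \<or> br x z \<in> ideal_power J (Suc q)"
    using x br_mem_ideal_power_Suc[OF I _ pq(2)] br_mem_ideal_power_Suc[OF J _ pq(3)] by blast
  ultimately show "br x z \<in> span (\<Union>{ideal_power I p \<inter> ideal_power J q | p q. p + q = Suc n})"
    using mem_sum_filtration[of "br x z" I "Suc p" J q] mem_sum_filtration[of "br x z" I p J "Suc q"]
      pq(1) by (auto simp: sum_filtration_def)
qed

lemma lcs_ideal_sum_subset:
  assumes I: "lie_ideal sc br I" and J: "lie_ideal sc br J"
  shows "lcs sc br {a + b | a b. a \<in> I \<and> b \<in> J} k \<subseteq> sum_filtration I J (Suc k)"
proof (induction k)
  case 0
  show ?case
  proof
    fix s assume "s \<in> lcs sc br {a + b | a b. a \<in> I \<and> b \<in> J} 0"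
    then obtain a b where s: "s = a + b" "a \<in> I" "b \<in> J" by auto
    then have "a \<in> sum_filtration I J (1 + 0)" "b \<in> sum_filtration I J (0 + 1)"
      by (intro mem_sum_filtration; simp add: ideal_power_def)+
    then show "s \<in> sum_filtration I J (Suc 0)"
      unfolding s(1) sum_filtration_def by (simp add: span_add)
  qed
next
  case (Suc k)
  have "br (a + b) y \<in> sum_filtration I J (Suc (Suc k))"
    if "a \<in> I" "b \<in> J" "y \<in> lcs sc br {a + b | a b. a \<in> I \<and> b \<in> J} k" for a b y
  proof -
    have "y \<in> sum_filtration I J (Suc k)" using Suc.IH that(3) by blast
    then have "br a y \<in> sum_filtration I J (Suc (Suc k))" "br b y \<in> sum_filtration I J (Suc (Suc k))"
      using br_mem_sum_filtration_Suc[OF I J] that(1,2) by blast+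
    then show ?thesis by (simp add: br_add_left sum_filtration_def span_add)
  qed
  then have "{br x y | x y. x \<in> {a + b | a b. a \<in> I \<and> b \<in> J}
      \<and> y \<in> lcs sc br {a + b | a b. a \<in> I \<and> b \<in> J} k} \<subseteq> sum_filtration I J (Suc (Suc k))"
    by blast
  then show ?case
    unfolding lcs.simps by (rule span_minimal) (simp add: sum_filtration_def)
qed

lemma lie_nilpotent_ideal_sum:
  assumes I: "lie_ideal sc br I" and J: "lie_ideal sc br J"
    and "lie_nilpotent sc br I" "lie_nilpotent sc br J"
  shows "lie_nilpotent sc br {a + b | a b. a \<in> I \<and> b \<in> J}"
proof -
  obtain m n where m: "lcs sc br I m = {0}" and n: "lcs sc br J n = {0}"
    using assms(3,4) by (auto simp: lie_nilpotent_def)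
  have "ideal_power I p \<inter> ideal_power J q \<subseteq> {0}" if "p + q = Suc (m + n)" for p q
    using ideal_power_subset_zero[OF I m, of p] ideal_power_subset_zero[OF J n, of q] that
    by (cases "m < p") auto
  then have "sum_filtration I J (Suc (m + n)) \<subseteq> {0}"
    unfolding sum_filtration_def by (intro span_minimal) auto
  then have "lcs sc br {a + b | a b. a \<in> I \<and> b \<in> J} (m + n) \<subseteq> {0}"
    using lcs_ideal_sum_subset[OF I J, of "m + n"] by blast
  moreover have "0 \<in> lcs sc br {a + b | a b. a \<in> I \<and> b \<in> J} (m + n)"
    using lie_ideal_sum[OF I J] subspace_0 unfolding lie_ideal_def by (intro zero_mem_lcs) blast
  ultimately show ?thesis unfolding lie_nilpotent_def by blast
qed

lemma nilradical_nilpotent_ideal: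
  assumes "finite (UNIV :: 'v set)"
  shows "lie_ideal sc br (nilradical sc br) \<and> lie_nilpotent sc br (nilradical sc br)"
proof -
  let ?Q = "{N. lie_ideal sc br N \<and> lie_nilpotent sc br N}"
  have "finite ?Q" using assms by (simp add: finite_subset[OF subset_UNIV] Finite_Set.finite_set)
  moreover have "{0} \<in> ?Q" by (auto simp: lie_ideal_def lie_nilpotent_def intro!: exI[of _ 0])
  ultimately obtain N where N: "N \<in> ?Q" and maximal: "\<And>M. M \<in> ?Q \<Longrightarrow> N \<subseteq> M \<Longrightarrow> N = M"
    using finite_has_maximal[of ?Q] by blast
  have greatest: "I \<subseteq> N" if "I \<in> ?Q" for I
  proof -
    let ?S = "{a + b | a b. a \<in> N \<and> b \<in> I}"
    have "0 \<in> N" "0 \<in> I" using N that by (auto simp: lie_ideal_def subspace_0)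
    then have "N \<subseteq> ?S" "I \<subseteq> ?S" by force+
    moreover have "?S \<in> ?Q" using N that lie_ideal_sum lie_nilpotent_ideal_sum by blast
    ultimately show ?thesis using maximal by blast
  qed
  have "nilradical sc br = N"
    unfolding nilradical_def by (rule the_equality) (use N greatest in blast)+
  then show ?thesis using N by simp
qed

lemma gen_minimal: "lie_subalgebra sc br S \<Longrightarrow> A \<subseteq> S \<Longrightarrow> gen sc br A \<subseteq> S"
  unfolding gen_def by blast

lemma subset_gen: "A \<subseteq> gen sc br A"
  unfolding gen_def by blast

lemma zero_mem_gen: "0 \<in> gen sc br A"
  unfolding gen_def lie_subalgebra_def using subspace_0 by blast

lemma zero_mem_nil_all: "0 \<in> nil_all sc br"
proof -
  have "lie_nilpotent sc br (gen sc br {h, 0})" for h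
  proof -
    have abelian: "br a b = 0" if "a \<in> span {h}" "b \<in> span {h}" for a b
      using that by (auto simp: span_singleton br_scale_left br_scale_right br_self)
    then have "lie_subalgebra sc br (span {h})" by (simp add: lie_subalgebra_def span_zero)
    then have "gen sc br {h, 0} \<subseteq> span {h}" by (rule gen_minimal) (simp add: span_base span_zero)
    then show ?thesis using abelian zero_mem_gen by (intro abelian_lie_nilpotent) blast+
  qed
  then show ?thesis by (simp add: nil_all_def)
qed

lemma ssc_br_eq_zero:
  assumes "strongly_self_centralizing sc br U" "a \<in> U" "b \<in> U"
  shows "br a b = 0"
proof (cases "a = 0")
  case False
  then have "centralizer br a = U" using assms by (auto simp: strongly_self_centralizing_def)
  then show ?thesis using assms(3) by (auto simp: centralizer_def)
qed simp

lemma nil_of_ssc: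
  assumes ssc: "strongly_self_centralizing sc br U" and x: "x \<in> U" "x \<noteq> 0"
  shows "nil_of sc br x = U"
proof
  show "U \<subseteq> nil_of sc br x"
  proof
    fix y assume "y \<in> U"
    then have "gen sc br {x, y} \<subseteq> U"
      using ssc x by (intro gen_minimal) (auto simp: strongly_self_centralizing_def)
    then have "lie_nilpotent sc br (gen sc br {x, y})"
      using ssc_br_eq_zero[OF ssc] zero_mem_gen by (intro abelian_lie_nilpotent) blast+
    then show "y \<in> nil_of sc br x" by (simp add: nil_of_def)
  qed
  have centralizer: "centralizer br u = U" if "u \<in> U" "u \<noteq> 0" for u
    using ssc that by (simp add: strongly_self_centralizing_def)
  show "nil_of sc br x \<subseteq> U"
  proof
    fix y assume "y \<in> nil_of sc br x"
    then have "lie_nilpotent sc br (gen sc br {x, y})" by (simp add: nil_of_def)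
    moreover have "x \<in> gen sc br {x, y}" "y \<in> gen sc br {x, y}" using subset_gen by blast+
    ultimately obtain z where z: "z \<noteq> 0" "br x z = 0" "br y z = 0"
      using lie_nilpotent_central_element x(2) by metis
    have "z \<in> U" using centralizer[OF x] z(2) by (auto simp: centralizer_def)
    moreover have "br z y = 0" using br_anticomm[of z y] z(3) by simp
    ultimately show "y \<in> U" using centralizer[of z] z(1) by (auto simp: centralizer_def)
  qed
qed

lemma nil_all_ssc:
  assumes ssc: "strongly_self_centralizing sc br U" and "U \<noteq> {0}" "U \<noteq> UNIV"
  shows "nil_all sc br = {0}"
proof -
  have "0 \<in> U" using ssc subspace_0 by (auto simp: strongly_self_centralizing_def lie_subalgebra_def)
  then obtain u where u: "u \<in> U" "u \<noteq> 0" using assms(2) by blast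
  have "v = 0" if v: "v \<in> nil_all sc br" for v
  proof (rule ccontr)
    assume "v \<noteq> 0"
    have "v \<in> nil_of sc br u" using v by (simp add: nil_all_def nil_of_def insert_commute)
    then have "nil_of sc br v = U" using nil_of_ssc[OF ssc] u \<open>v \<noteq> 0\<close> by simp
    moreover have "nil_of sc br v = UNIV" using v by (auto simp: nil_all_def nil_of_def insert_commute)
    ultimately show False using assms(3) by simp
  qed
  then show ?thesis using zero_mem_nil_all by blast
qed

text \<open>Since \<open>nil\<^sub>L(x) = U\<close> for \<open>0 \<noteq> x \<in> U\<close>, no edge leaves \<open>U - {0}\<close>.\<close>
lemma not_ng_connected_ssc:
  assumes ssc: "strongly_self_centralizing sc br U" and "U \<noteq> {0}" "U \<noteq> UNIV"
  shows "\<not> ng_connected sc br"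
proof
  assume connected: "ng_connected sc br"
  have vertices: "ng_vertices sc br = - {0}"
    using nil_all_ssc[OF assms] by (auto simp: ng_vertices_def)
  have "0 \<in> U" using ssc subspace_0 by (auto simp: strongly_self_centralizing_def lie_subalgebra_def)
  then obtain u where u: "u \<in> U" "u \<noteq> 0" using assms(2) by blast
  obtain v where v: "v \<notin> U" using assms(3) by blast
  have "(ng_adj sc br)\<^sup>*\<^sup>* u v" using connected u v \<open>0 \<in> U\<close> vertices by (auto simp: ng_connected_def)
  moreover have "w \<in> U" if "(ng_adj sc br)\<^sup>*\<^sup>* u w" for w
    using that
  proof (induction rule: rtranclp_induct)
    case (step w w')
    then have "w \<noteq> 0" "w' \<in> nil_of sc br w" by (auto simp: ng_adj_def nil_of_def vertices)
    then show ?case using nil_of_ssc[OF ssc step.IH] by simp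
  qed (use u in simp)
  ultimately show False using v by blast
qed

lemma ng_clique_nilpotent_subalgebra:
  assumes "nil_all sc br = {0}" "lie_subalgebra sc br N" "lie_nilpotent sc br N"
  shows "ng_clique sc br (N - {0})"
proof -
  have vertices: "ng_vertices sc br = - {0}" using assms(1) by (auto simp: ng_vertices_def)
  have "ng_adj sc br x y" if "x \<in> N - {0}" "y \<in> N - {0}" "x \<noteq> y" for x y
  proof -
    have "gen sc br {x, y} \<subseteq> N" using assms(2) that by (intro gen_minimal) auto
    then have "lie_nilpotent sc br (gen sc br {x, y})"
      by (rule lie_nilpotent_subset[OF assms(3) _ zero_mem_gen])
    then show ?thesis using that by (simp add: ng_adj_def vertices)
  qed
  then show ?thesis by (auto simp: ng_clique_def vertices)
qed

lemma finite_UNIV_if_fin_dim: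
  assumes "fin_dim sc" "finite (UNIV :: 'k set)"
  shows "finite (UNIV :: 'v set)"
proof -
  obtain B where B: "finite B" "span B = UNIV" using assms(1) by (auto simp: fin_dim_def)
  let ?comb = "\<lambda>u. \<Sum>v\<in>B. sc (u v) v"
  have "UNIV = range ?comb" using B span_finite[OF B(1)] by simp
  also have "\<dots> \<subseteq> ?comb ` (B \<rightarrow>\<^sub>E UNIV)"
  proof
    fix w assume "w \<in> range ?comb"
    then obtain u where "w = ?comb u" by blast
    moreover have "?comb (restrict u B) = ?comb u" by (intro sum.cong) auto
    ultimately show "w \<in> ?comb ` (B \<rightarrow>\<^sub>E UNIV)" by (intro image_eqI[of _ _ "restrict u B"]) auto
  qed
  finally have "UNIV \<subseteq> ?comb ` (B \<rightarrow>\<^sub>E UNIV)" .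
  moreover have "finite (?comb ` (B \<rightarrow>\<^sub>E UNIV))"
    using B(1) assms(2) by (intro finite_imageI finite_PiE) auto
  ultimately show ?thesis by (rule finite_subset)
qed

end

lemma card_le_ng_clique_number:
  fixes C :: "'v::ab_group_add set"
  assumes "finite (UNIV :: 'v set)" "ng_clique sc br C"
  shows "card C \<le> ng_clique_number sc br"
proof -
  have "{card C | C. finite C \<and> ng_clique sc br C} \<subseteq> {..card (UNIV :: 'v set)}"
    using card_mono[OF assms(1) subset_UNIV] by auto
  then show ?thesis
    unfolding ng_clique_number_def using assms
    by (intro le_cSup_finite) (auto intro: finite_subset)
qed

context lie_alg
begin

lemma card_nilradical_le_ng_clique_number:
  assumes finite: "finite (UNIV :: 'v set)" and "nil_all sc br = {0}"
  shows "card (nilradical sc br) - 1 \<le> ng_clique_number sc br"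
proof -
  have "lie_subalgebra sc br (nilradical sc br)" "lie_nilpotent sc br (nilradical sc br)"
    using nilradical_nilpotent_ideal[OF finite] by (auto simp: lie_ideal_def lie_subalgebra_def)
  then have clique: "ng_clique sc br (nilradical sc br - {0})" and "0 \<in> nilradical sc br"
    using ng_clique_nilpotent_subalgebra[OF assms(2)] subspace_0 by (auto simp: lie_subalgebra_def)
  have "card (nilradical sc br) - 1 = card (nilradical sc br - {0})"
    using \<open>0 \<in> nilradical sc br\<close> by (simp add: card_Diff_singleton)
  also have "\<dots> \<le> ng_clique_number sc br" using card_le_ng_clique_number[OF finite clique] .
  finally show ?thesis .
qed

end

theorem theorem6p6:
  fixes sc :: "'k::field \<Rightarrow> 'v::ab_group_add \<Rightarrow> 'v"
    and br :: "'v \<Rightarrow> 'v \<Rightarrow> 'v"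
    and U :: "'v set"
  assumes "lie_algebra sc br"
    and "fin_dim sc"
    and "\<not> lie_nilpotent sc br UNIV"
    and "strongly_self_centralizing sc br U"
    and "U \<noteq> {0}"
    and "U \<noteq> UNIV"
  shows "(\<forall>x\<in>U. x \<noteq> 0 \<longrightarrow> nil_of sc br x = U)
    \<and> \<not> ng_connected sc br
    \<and> (finite (UNIV :: 'k set) \<longrightarrow> card (nilradical sc br) - 1 \<le> ng_clique_number sc br)"
proof -
  interpret lie_alg sc br using lie_alg_if_lie_algebra[OF assms(1)] .
  have "nil_all sc br = {0}" using nil_all_ssc[OF assms(4-6)] .
  then have "card (nilradical sc br) - 1 \<le> ng_clique_number sc br"
    if "finite (UNIV :: 'k set)"
    using card_nilradical_le_ng_clique_number finite_UNIV_if_fin_dim[OF assms(2) that] by blast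
  then show ?thesis
    using nil_of_ssc[OF assms(4)] not_ng_connected_ssc[OF assms(4-6)] by blast
qed

end
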